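(* Consider a credit-attribution game with authors $N=\{1,\dots,n\}$ and let $x\in N$. As a function of the reliabilities $p=(p_1,\dots,p_n)\in[0,1]^n$, the Shapley value $Sh[\overline{v_{FC}}](x)$ of $x$ in the reliability extension of the full credit game is monotonically decreasing in the reliability $p_j$ of each coauthor $j\in CA(x)$, and the Shapley value $Sh[\overline{v_{FO}}](x)$ in the reliability extension of the full obligation game is monotonically increasing in each $p_j$, $j\in CA(x)$; neither depends on $p_j$ for $j\notin CA(x)\cup\{x\}$.
   Context: A credit-attribution game has authors $N$ and papers $P_1,\dots,P_m$, paper $P_k$ having author set $Auth_k$ and weight $w_k\in\mathbb{R}_+$. $Pap_x$ is the set of papers of $x$ and $CA(x)$ the set of coauthors of $x$, i.e. players $l\ne x$ sharing a paper with $x$. $v_{FC}(S)=\sum\{w_k:Auth_k\cap S\ne\emptyset\}$, $v_{FO}(S)=\sum\{w_k:Auth_k\subseteq S\}$. For $T\subseteq S$, $\Pi_{T,S}=\prod_{i\in T}p_i\prod_{i\in S\setminus T}(1-p_i)$; reliability extension $\overline v(S)=\sum_{T\subseteq S}v(T)\Pi_{T,S}$. Shapley value $Sh[v](x)=\frac1{n!}\sum_\pi[v(S^x_\pi\cup\{x\})-v(S^x_\pi)]$ over permutations $\pi$, $S^x_\pi$ the players preceding $x$. *)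

theory Defs
  imports "HOL-Analysis.Analysis" "HOL-Combinatorics.Multiset_Permutations"
begin

text \<open>Credit attribution game: authors N (finite set), papers indexed by k < m,
  author sets Auth k, weights w k.\<close>

definition papers_of :: "nat \<Rightarrow> (nat \<Rightarrow> 'a set) \<Rightarrow> 'a \<Rightarrow> nat set" where
  "papers_of m Auth x = {k. k < m \<and> x \<in> Auth k}"

definition coauthors :: "nat \<Rightarrow> (nat \<Rightarrow> 'a set) \<Rightarrow> 'a \<Rightarrow> 'a set" where
  "coauthors m Auth x = {l. l \<noteq> x \<and> (\<exists>k\<in>papers_of m Auth x. l \<in> Auth k)}"

definition v_FC :: "nat \<Rightarrow> (nat \<Rightarrow> 'a set) \<Rightarrow> (nat \<Rightarrow> real) \<Rightarrow> 'a set \<Rightarrow> real" where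
  "v_FC m Auth w S = (\<Sum>k\<in>{k. k < m \<and> Auth k \<inter> S \<noteq> {}}. w k)"

definition v_FO :: "nat \<Rightarrow> (nat \<Rightarrow> 'a set) \<Rightarrow> (nat \<Rightarrow> real) \<Rightarrow> 'a set \<Rightarrow> real" where
  "v_FO m Auth w S = (\<Sum>k\<in>{k. k < m \<and> Auth k \<subseteq> S}. w k)"

definition Pi_TS :: "('a \<Rightarrow> real) \<Rightarrow> 'a set \<Rightarrow> 'a set \<Rightarrow> real" where
  "Pi_TS p T S = (\<Prod>i\<in>T. p i) * (\<Prod>i\<in>S - T. 1 - p i)"

definition rel_ext :: "('a \<Rightarrow> real) \<Rightarrow> ('a set \<Rightarrow> real) \<Rightarrow> 'a set \<Rightarrow> real" where
  "rel_ext p v S = (\<Sum>T\<in>Pow S. v T * Pi_TS p T S)"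

text \<open>Shapley value: permutations of N are represented as orderings (distinct lists
  enumerating N); the players preceding x are those before x in the list.\<close>
definition predecessors :: "'a list \<Rightarrow> 'a \<Rightarrow> 'a set" where
  "predecessors l x = set (takeWhile (\<lambda>y. y \<noteq> x) l)"

definition shapley :: "'a set \<Rightarrow> ('a set \<Rightarrow> real) \<Rightarrow> 'a \<Rightarrow> real" where
  "shapley N v x = (1 / fact (card N)) *
     (\<Sum>l\<in>permutations_of_set N. v (insert x (predecessors l x)) - v (predecessors l x))"

end

theory Submission
  imports Defs
begin

text \<open>Expanding the reliability extension coalition by coalition gives closed forms for the
  marginal contribution of \<open>x\<close> to a coalition \<open>S\<close>: in the full credit game, paper \<open>k\<close> of \<open>x\<close>
  contributes \<open>w\<^sub>k p\<^sub>x \<Prod>(1 - p\<^sub>i)\<close> over the coauthors \<open>i \<in> S\<close>, which decreases in every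
  coauthor's reliability; in the full obligation game it contributes \<open>w\<^sub>k \<Prod>p\<^sub>i\<close> over all its
  authors when they all lie in \<open>S \<union> {x}\<close>, which increases. Both only involve the reliabilities of
  \<open>x\<close> and its coauthors, and the Shapley value is an average of marginal contributions.\<close>

lemma rel_ext_insert:
  assumes "finite S" "a \<notin> S"
  shows "rel_ext p v (insert a S) =
           p a * rel_ext p (\<lambda>T. v (insert a T)) S + (1 - p a) * rel_ext p v S"
proof -
  have disj: "Pow S \<inter> insert a ` Pow S = {}" using assms(2) by auto
  have inj: "inj_on (insert a) (Pow S)"
    unfolding inj_on_def using assms(2) by (metis Pow_iff insert_ident subsetD)
  have fin: "finite (Pow S)" "finite (insert a ` Pow S)" using assms by auto
  have "rel_ext p v (insert a S) = (\<Sum>T\<in>Pow S. v T * Pi_TS p T (insert a S))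
        + (\<Sum>T\<in>insert a ` Pow S. v T * Pi_TS p T (insert a S))"
    unfolding rel_ext_def Pow_insert by (rule sum.union_disjoint[OF fin disj])
  also have "(\<Sum>T\<in>insert a ` Pow S. v T * Pi_TS p T (insert a S))
       = (\<Sum>T\<in>Pow S. v (insert a T) * Pi_TS p (insert a T) (insert a S))"
    by (subst sum.reindex[OF inj]) simp
  also have "\<dots> = (\<Sum>T\<in>Pow S. p a * (v (insert a T) * Pi_TS p T S))"
  proof (rule sum.cong)
    fix T assume "T \<in> Pow S"
    then have "a \<notin> T" "finite T" "insert a S - insert a T = S - T"
      using assms finite_subset by auto
    then show "v (insert a T) * Pi_TS p (insert a T) (insert a S) =
               p a * (v (insert a T) * Pi_TS p T S)"
      unfolding Pi_TS_def by simp
  qed simp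
  also have "(\<Sum>T\<in>Pow S. v T * Pi_TS p T (insert a S)) =
             (\<Sum>T\<in>Pow S. (1 - p a) * (v T * Pi_TS p T S))"
  proof (rule sum.cong)
    fix T assume "T \<in> Pow S"
    then have "a \<notin> T" "finite T" "insert a S - T = insert a (S - T)"
      using assms finite_subset by auto
    then show "v T * Pi_TS p T (insert a S) = (1 - p a) * (v T * Pi_TS p T S)"
      unfolding Pi_TS_def using assms by simp
  qed simp
  finally show ?thesis unfolding rel_ext_def sum_distrib_left by simp
qed

lemma rel_ext_const_one: "finite S \<Longrightarrow> rel_ext p (\<lambda>T. 1) S = 1"
proof (induction S rule: finite_induct)
  case empty then show ?case by (simp add: rel_ext_def Pi_TS_def)
next
  case (insert a S) then show ?case by (simp add: rel_ext_insert algebra_simps)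
qed

lemma rel_ext_sum:
  "rel_ext p (\<lambda>T. \<Sum>k\<in>K. f k T) S = (\<Sum>k\<in>K. rel_ext p (f k) S)"
  unfolding rel_ext_def sum_distrib_right by (rule sum.swap)

lemma rel_ext_scale: "rel_ext p (\<lambda>T. c * v T) S = c * rel_ext p v S"
  unfolding rel_ext_def sum_distrib_left by (simp add: algebra_simps)

lemma rel_ext_meets_indicator:
  "finite S \<Longrightarrow> rel_ext p (\<lambda>T. if A \<inter> T \<noteq> {} then 1 else 0) S = 1 - (\<Prod>i\<in>A \<inter> S. 1 - p i)"
proof (induction S rule: finite_induct)
  case empty then show ?case by (simp add: rel_ext_def Pi_TS_def)
next
  case (insert a S)
  show ?case
  proof (cases "a \<in> A")
    case True
    then have "(\<lambda>T. if A \<inter> insert a T \<noteq> {} then 1 else 0) = (\<lambda>T. 1::real)"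
      and "A \<inter> insert a S = insert a (A \<inter> S)" by auto
    with insert.hyps show ?thesis
      by (simp add: rel_ext_insert rel_ext_const_one insert.IH algebra_simps
               del: insert_Diff_single)
  next
    case False
    then have "(\<lambda>T. if A \<inter> insert a T \<noteq> {} then 1 else 0) =
               (\<lambda>T. if A \<inter> T \<noteq> {} then 1 else (0::real))"
      and "A \<inter> insert a S = A \<inter> S" by auto
    with insert show ?thesis by (simp add: rel_ext_insert algebra_simps)
  qed
qed

lemma rel_ext_contains_indicator:
  "finite S \<Longrightarrow>
   rel_ext p (\<lambda>T. if A \<subseteq> T then 1 else 0) S = (if A \<subseteq> S then (\<Prod>i\<in>A. p i) else 0)"
proof (induction S arbitrary: A rule: finite_induct)
  case empty then show ?case by (simp add: rel_ext_def Pi_TS_def)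
next
  case (insert a S)
  have drop_a: "(\<lambda>T. if A \<subseteq> insert a T then 1 else 0) = (\<lambda>T. if A - {a} \<subseteq> T then 1 else (0::real))"
    by (rule ext) (simp add: subset_insert_iff)
  show ?case
  proof (cases "a \<in> A")
    case True
    have "\<not> A \<subseteq> S" using True insert by auto
    moreover have "A \<subseteq> insert a S \<Longrightarrow> (\<Prod>i\<in>A. p i) = p a * (\<Prod>i\<in>A - {a}. p i)"
      using True insert by (meson finite_insert finite_subset prod.remove)
    ultimately show ?thesis using insert True by (auto simp add: rel_ext_insert drop_a)
  next
    case False
    then have "A - {a} = A" "A \<subseteq> insert a S \<longleftrightarrow> A \<subseteq> S" by auto
    with insert show ?thesis by (simp add: rel_ext_insert drop_a algebra_simps)
  qed
qed

lemma v_FC_eq_sum_indicators: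
  "v_FC m Auth w = (\<lambda>T. \<Sum>k<m. w k * (if Auth k \<inter> T \<noteq> {} then 1 else 0))"
proof
  fix T
  have "{k. k < m \<and> Auth k \<inter> T \<noteq> {}} = {k\<in>{..<m}. Auth k \<inter> T \<noteq> {}}" by auto
  then show "v_FC m Auth w T = (\<Sum>k<m. w k * (if Auth k \<inter> T \<noteq> {} then 1 else 0))"
    unfolding v_FC_def using sum.inter_filter[of "{..<m}" w "\<lambda>k. Auth k \<inter> T \<noteq> {}"]
    by (simp add: if_distrib cong: if_cong)
qed

lemma v_FO_eq_sum_indicators:
  "v_FO m Auth w = (\<lambda>T. \<Sum>k<m. w k * (if Auth k \<subseteq> T then 1 else 0))"
proof
  fix T
  have "{k. k < m \<and> Auth k \<subseteq> T} = {k\<in>{..<m}. Auth k \<subseteq> T}" by auto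
  then show "v_FO m Auth w T = (\<Sum>k<m. w k * (if Auth k \<subseteq> T then 1 else 0))"
    unfolding v_FO_def using sum.inter_filter[of "{..<m}" w "\<lambda>k. Auth k \<subseteq> T"]
    by (simp add: if_distrib cong: if_cong)
qed

lemma rel_ext_v_FC_marginal:
  assumes "finite S" "x \<notin> S"
  shows "rel_ext p (v_FC m Auth w) (insert x S) - rel_ext p (v_FC m Auth w) S
    = (\<Sum>k<m. if x \<in> Auth k then w k * p x * (\<Prod>i\<in>Auth k \<inter> S. 1 - p i) else 0)"
proof -
  have rel: "rel_ext p (v_FC m Auth w) S' = (\<Sum>k<m. w k * (1 - (\<Prod>i\<in>Auth k \<inter> S'. 1 - p i)))"
    if "finite S'" for S'
    using that by (simp add: v_FC_eq_sum_indicators rel_ext_sum rel_ext_scale rel_ext_meets_indicator)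
  have "Auth k \<inter> insert x S = insert x (Auth k \<inter> S)" "x \<notin> Auth k \<inter> S" "finite (Auth k \<inter> S)"
    if "x \<in> Auth k" for k
    using that assms by auto
  then show ?thesis
    using assms by (auto simp: rel sum_subtractf[symmetric] algebra_simps intro!: sum.cong)
qed

lemma rel_ext_v_FO_marginal:
  assumes "finite S" "x \<notin> S"
  shows "rel_ext p (v_FO m Auth w) (insert x S) - rel_ext p (v_FO m Auth w) S
    = (\<Sum>k<m. if x \<in> Auth k \<and> Auth k \<subseteq> insert x S then w k * (\<Prod>i\<in>Auth k. p i) else 0)"
proof -
  have rel: "rel_ext p (v_FO m Auth w) S' =
             (\<Sum>k<m. w k * (if Auth k \<subseteq> S' then \<Prod>i\<in>Auth k. p i else 0))"
    if "finite S'" for S'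
    using that
    by (simp add: v_FO_eq_sum_indicators rel_ext_sum rel_ext_scale rel_ext_contains_indicator)
  have "Auth k \<subseteq> insert x S \<longleftrightarrow> Auth k \<subseteq> S" if "x \<notin> Auth k" for k
    using that by (auto simp: subset_insert_iff)
  moreover have "\<not> Auth k \<subseteq> S" if "x \<in> Auth k" for k
    using that assms by auto
  ultimately show ?thesis
    using assms by (auto simp: rel sum_subtractf[symmetric] intro!: sum.cong)
qed

lemma rel_ext_v_FC_marginal_antimono:
  assumes "finite S" "x \<notin> S" "\<And>k. k < m \<Longrightarrow> w k \<ge> 0"
    and "p x = q x" "0 \<le> q x" "\<And>i. i \<in> S \<Longrightarrow> p i \<le> q i \<and> q i \<le> 1"
  shows "rel_ext q (v_FC m Auth w) (insert x S) - rel_ext q (v_FC m Auth w) S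
       \<le> rel_ext p (v_FC m Auth w) (insert x S) - rel_ext p (v_FC m Auth w) S"
  unfolding rel_ext_v_FC_marginal[OF assms(1,2)]
proof (rule sum_mono)
  fix k assume "k \<in> {..<m}"
  have "(\<Prod>i\<in>Auth k \<inter> S. 1 - q i) \<le> (\<Prod>i\<in>Auth k \<inter> S. 1 - p i)"
    using assms(6) by (intro prod_mono) force
  with assms(4,5) \<open>k \<in> {..<m}\<close> assms(3) show
    "(if x \<in> Auth k then w k * q x * (\<Prod>i\<in>Auth k \<inter> S. 1 - q i) else 0)
   \<le> (if x \<in> Auth k then w k * p x * (\<Prod>i\<in>Auth k \<inter> S. 1 - p i) else 0)"
    by (simp add: mult_left_mono mult.assoc)
qed

lemma rel_ext_v_FO_marginal_mono:
  assumes "finite S" "x \<notin> S" "\<And>k. k < m \<Longrightarrow> w k \<ge> 0"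
    and "\<And>k i. k < m \<Longrightarrow> i \<in> Auth k \<Longrightarrow> 0 \<le> p i \<and> p i \<le> q i"
  shows "rel_ext p (v_FO m Auth w) (insert x S) - rel_ext p (v_FO m Auth w) S
       \<le> rel_ext q (v_FO m Auth w) (insert x S) - rel_ext q (v_FO m Auth w) S"
  unfolding rel_ext_v_FO_marginal[OF assms(1,2)]
proof (rule sum_mono)
  fix k assume "k \<in> {..<m}"
  then have "(\<Prod>i\<in>Auth k. p i) \<le> (\<Prod>i\<in>Auth k. q i)"
    using assms(4) by (intro prod_mono) simp
  with \<open>k \<in> {..<m}\<close> assms(3) show
    "(if x \<in> Auth k \<and> Auth k \<subseteq> insert x S then w k * (\<Prod>i\<in>Auth k. p i) else 0)
   \<le> (if x \<in> Auth k \<and> Auth k \<subseteq> insert x S then w k * (\<Prod>i\<in>Auth k. q i) else 0)"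
    by (simp add: mult_left_mono)
qed

lemma rel_ext_credit_marginals_cong:
  assumes "finite S" "x \<notin> S" "\<And>k i. k < m \<Longrightarrow> x \<in> Auth k \<Longrightarrow> i \<in> Auth k \<Longrightarrow> p i = q i"
  shows "rel_ext p (v_FC m Auth w) (insert x S) - rel_ext p (v_FC m Auth w) S
       = rel_ext q (v_FC m Auth w) (insert x S) - rel_ext q (v_FC m Auth w) S"
    and "rel_ext p (v_FO m Auth w) (insert x S) - rel_ext p (v_FO m Auth w) S
       = rel_ext q (v_FO m Auth w) (insert x S) - rel_ext q (v_FO m Auth w) S"
  using assms(3)
  by (auto simp: rel_ext_v_FC_marginal[OF assms(1,2)] rel_ext_v_FO_marginal[OF assms(1,2)]
           intro!: sum.cong prod.cong)

lemma predecessors_subset: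
  "l \<in> permutations_of_set N \<Longrightarrow> predecessors l x \<subseteq> N"
  unfolding predecessors_def by (auto dest: set_takeWhileD permutations_of_setD)

lemma finite_predecessors: "finite (predecessors l x)"
  unfolding predecessors_def by simp

lemma not_in_predecessors: "x \<notin> predecessors l x"
  unfolding predecessors_def by (auto dest: set_takeWhileD)

lemma shapley_mono_marginals:
  assumes "\<And>S. finite S \<Longrightarrow> S \<subseteq> N \<Longrightarrow> x \<notin> S \<Longrightarrow> v (insert x S) - v S \<le> v' (insert x S) - v' S"
  shows "shapley N v x \<le> shapley N v' x"
  unfolding shapley_def
  by (intro mult_left_mono sum_mono assms)
     (auto simp: predecessors_subset not_in_predecessors finite_predecessors)

lemma shapley_cong_marginals:
  assumes "\<And>S. finite S \<Longrightarrow> S \<subseteq> N \<Longrightarrow> x \<notin> S \<Longrightarrow> v (insert x S) - v S = v' (insert x S) - v' S"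
  shows "shapley N v x = shapley N v' x"
  using shapley_mono_marginals[of N x v v'] shapley_mono_marginals[of N x v' v] assms
  by (simp add: order_antisym)

theorem theorem8:
  fixes N :: "'a set" and m :: nat and Auth :: "nat \<Rightarrow> 'a set" and w :: "nat \<Rightarrow> real"
    and x :: 'a
  assumes finN: "finite N"
    and auth: "\<And>k. k < m \<Longrightarrow> Auth k \<subseteq> N \<and> Auth k \<noteq> {}"
    and wpos: "\<And>k. k < m \<Longrightarrow> w k \<ge> 0"
    and xN: "x \<in> N"
  shows
    "(\<forall>j\<in>coauthors m Auth x. \<forall>p q :: 'a \<Rightarrow> real.
        (\<forall>i\<in>N. 0 \<le> p i \<and> p i \<le> 1) \<longrightarrow> (\<forall>i\<in>N. 0 \<le> q i \<and> q i \<le> 1) \<longrightarrow>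
        (\<forall>i\<in>N - {j}. p i = q i) \<longrightarrow> p j \<le> q j \<longrightarrow>
        shapley N (rel_ext q (v_FC m Auth w)) x \<le> shapley N (rel_ext p (v_FC m Auth w)) x \<and>
        shapley N (rel_ext p (v_FO m Auth w)) x \<le> shapley N (rel_ext q (v_FO m Auth w)) x)
   \<and> (\<forall>j\<in>N - coauthors m Auth x - {x}. \<forall>p q :: 'a \<Rightarrow> real.
        (\<forall>i\<in>N. 0 \<le> p i \<and> p i \<le> 1) \<longrightarrow> (\<forall>i\<in>N. 0 \<le> q i \<and> q i \<le> 1) \<longrightarrow>
        (\<forall>i\<in>N - {j}. p i = q i) \<longrightarrow>
        shapley N (rel_ext q (v_FC m Auth w)) x = shapley N (rel_ext p (v_FC m Auth w)) x \<and>
        shapley N (rel_ext q (v_FO m Auth w)) x = shapley N (rel_ext p (v_FO m Auth w)) x)"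
proof (intro conjI ballI allI impI)
  fix j p q
  assume "j \<in> coauthors m Auth x" and p: "\<forall>i\<in>N. 0 \<le> p i \<and> p i \<le> (1::real)"
    and q: "\<forall>i\<in>N. 0 \<le> q i \<and> q i \<le> (1::real)"
    and "\<forall>i\<in>N - {j}. p i = q i" "p j \<le> q j"
  moreover have "j \<noteq> x" using \<open>j \<in> coauthors m Auth x\<close> unfolding coauthors_def by auto
  ultimately have "p x = q x" and p_le_q: "\<And>i. i \<in> N \<Longrightarrow> p i \<le> q i"
    using xN by (metis DiffI order_refl singletonD)+
  moreover have "0 \<le> p i \<and> p i \<le> q i" if "k < m" "i \<in> Auth k" for k i
    using auth p p_le_q that by blast
  ultimately show
    "shapley N (rel_ext q (v_FC m Auth w)) x \<le> shapley N (rel_ext p (v_FC m Auth w)) x"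
    "shapley N (rel_ext p (v_FO m Auth w)) x \<le> shapley N (rel_ext q (v_FO m Auth w)) x"
    using q xN wpos
    by (auto intro!: shapley_mono_marginals rel_ext_v_FC_marginal_antimono
                     rel_ext_v_FO_marginal_mono)
next
  fix j p q
  assume j: "j \<in> N - coauthors m Auth x - {x}" and "\<forall>i\<in>N. 0 \<le> p i \<and> p i \<le> (1::real)"
    and "\<forall>i\<in>N. 0 \<le> q i \<and> q i \<le> 1" and "\<forall>i\<in>N - {j}. p i = q i"
  moreover have "j \<notin> Auth k" if "k < m" "x \<in> Auth k" for k
    using j that unfolding coauthors_def papers_of_def by auto
  ultimately have "p i = q i" if "k < m" "x \<in> Auth k" "i \<in> Auth k" for k i
    using auth that by blast
  then show "shapley N (rel_ext q (v_FC m Auth w)) x = shapley N (rel_ext p (v_FC m Auth w)) x"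
    and "shapley N (rel_ext q (v_FO m Auth w)) x = shapley N (rel_ext p (v_FO m Auth w)) x"
    by (auto intro!: shapley_cong_marginals rel_ext_credit_marginals_cong)
qed

end
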